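(* Let $P$ be a set of $n$ points in $\mathbb{R}^3$ lying above the $xy$-plane, let $c$ be a centerpoint of $P$, and let $T=\binom{P}{3}$ be the set of all triangles with vertices in $P$. Then for any point $r$ on the $xy$-plane, the segment $cr$ intersects at least $\Omega(n^3)$ triangles of $T$ (with an absolute constant in the $\Omega$).
   Context: A centerpoint of a finite set $P\subset\mathbb{R}^3$ is a point $c\in\mathbb{R}^3$ such that every closed halfspace containing $c$ contains at least $|P|/4$ points of $P$. *)

theory Defs
  imports "HOL-Analysis.Analysis"
begin

definition centerpoint :: "(real^3) set \<Rightarrow> real^3 \<Rightarrow> bool" where
  "centerpoint P c \<longleftrightarrow>
     (\<forall>a b. a \<noteq> 0 \<longrightarrow> a \<bullet> c \<le> b \<longrightarrow>
        real (card {p \<in> P. a \<bullet> p \<le> b}) \<ge> real (card P) / 4)"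

text \<open>Triangles with vertices in P: the 3-element subsets of P (the triangle
  is the convex hull of its vertex set).\<close>
definition triangles :: "(real^3) set \<Rightarrow> (real^3) set set" where
  "triangles P = {S. S \<subseteq> P \<and> card S = 3}"

end

theory Submission
  imports Defs
begin

(* Draw m = 512 points of P with replacement.  Since c is a centerpoint, every closed halfspace
   through c contains at least n/4 points of P, and by Radon's theorem these halfspaces shatter no
   five points.  The epsilon-net theorem (double sampling, Chebyshev, Sauer-Shelah) shows that at
   most a quarter of the samples miss one of these halfspaces, i.e. have c outside their convex
   hull; at most another quarter have fewer than three distinct points.  For each remaining sample,
   Caratheodory puts c into a simplex spanned by sample points, and the segment from c to r, which
   ends below all points, leaves this simplex through a facet: a triangle of the sample.  A fixed
   triangle lies in at most m^3 n^(m-3) of the n^m samples, so at least n^3 / (2 m^3) triangles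
   meet the segment. *)

section \<open>Shattering and the Sauer-Shelah bound\<close>

definition shatters :: "'a set set \<Rightarrow> 'a set \<Rightarrow> bool" where
  "shatters F S \<longleftrightarrow> (\<forall>T\<subseteq>S. \<exists>A\<in>F. A \<inter> S = T)"

lemma shattersD: "shatters F S \<Longrightarrow> T \<subseteq> S \<Longrightarrow> \<exists>A\<in>F. A \<inter> S = T"
  unfolding shatters_def by blast

lemma shatters_subset:
  assumes "shatters F S" "S' \<subseteq> S"
  shows "shatters F S'"
  unfolding shatters_def
proof (intro allI impI)
  fix T assume "T \<subseteq> S'"
  then obtain A where "A \<in> F" "A \<inter> S = T"
    using shattersD[OF assms(1)] assms(2) by (meson order_trans)
  then show "\<exists>A\<in>F. A \<inter> S' = T"
    using assms(2) \<open>T \<subseteq> S'\<close> by blast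
qed

lemma shatters_if_shatters_split:
  assumes "shatters {A\<in>F. x \<notin> A} S \<or> shatters ((\<lambda>A. A - {x}) ` {A\<in>F. x \<in> A}) S" "x \<notin> S"
  shows "shatters F S"
  unfolding shatters_def
proof (intro allI impI)
  fix T assume "T \<subseteq> S"
  from assms(1) show "\<exists>A\<in>F. A \<inter> S = T"
  proof
    assume "shatters {A\<in>F. x \<notin> A} S"
    from shattersD[OF this \<open>T \<subseteq> S\<close>] show ?thesis
      by blast
  next
    assume "shatters ((\<lambda>A. A - {x}) ` {A\<in>F. x \<in> A}) S"
    from shattersD[OF this \<open>T \<subseteq> S\<close>] obtain A where "A \<in> F" "(A - {x}) \<inter> S = T"
      by blast
    then show ?thesis
      using assms(2) by blast
  qed
qed

lemma shatters_insert_if_shatters_split: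
  assumes "shatters {A\<in>F. x \<notin> A} S" "shatters ((\<lambda>A. A - {x}) ` {A\<in>F. x \<in> A}) S" "x \<notin> S"
  shows "shatters F (insert x S)"
  unfolding shatters_def
proof (intro allI impI)
  fix T assume T: "T \<subseteq> insert x S"
  show "\<exists>A\<in>F. A \<inter> insert x S = T"
  proof (cases "x \<in> T")
    case True
    have "T - {x} \<subseteq> S"
      using T by blast
    then obtain A where "A \<in> F" "x \<in> A" "(A - {x}) \<inter> S = T - {x}"
      using shattersD[OF assms(2) \<open>T - {x} \<subseteq> S\<close>] by blast
    then show ?thesis
      using True assms(3) by blast
  next
    case False
    then have "T \<subseteq> S"
      using T by blast
    then obtain A where "A \<in> F" "x \<notin> A" "A \<inter> S = T"
      using shattersD[OF assms(1) \<open>T \<subseteq> S\<close>] by blast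
    then show ?thesis
      using False by blast
  qed
qed

theorem Pajor_card_shattered:
  assumes "finite X" "F \<subseteq> Pow X"
  shows "card F \<le> card {S. S \<subseteq> X \<and> shatters F S}"
  using assms
proof (induction X arbitrary: F rule: finite_induct)
  case empty
  then have "F = {} \<or> F = {{}}"
    by (metis Pow_empty subset_singletonD)
  moreover have "{S. S \<subseteq> {} \<and> shatters {{}} S} = {{}}"
    unfolding shatters_def by blast
  ultimately show ?case
    by (metis card.empty le0 order_refl)
next
  case (insert x X)
  define F0 where "F0 = {A\<in>F. x \<notin> A}"
  define F1 where "F1 = (\<lambda>A. A - {x}) ` {A\<in>F. x \<in> A}"
  define Sh where "Sh G = {S. S \<subseteq> X \<and> shatters G S}" for G
  have fin: "finite (Sh G)" for G
    unfolding Sh_def using insert.hyps(1) by simp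
  have "finite F"
    using insert.prems insert.hyps(1) by (meson finite_Pow_iff finite_insert rev_finite_subset)
  then have "card F = card F0 + card {A\<in>F. x \<in> A}"
    unfolding F0_def by (subst card_Un_disjoint[symmetric]) (auto intro: arg_cong[where f = card])
  also have "card {A\<in>F. x \<in> A} = card F1"
    unfolding F1_def
    by (rule card_image[symmetric]) (intro inj_onI, metis insert_Diff mem_Collect_eq)
  also have "card F0 + card F1 \<le> card (Sh F0) + card (Sh F1)"
    using insert.prems unfolding Sh_def F0_def F1_def by (intro add_mono insert.IH) auto
  also have "\<dots> = card (Sh F0 \<union> Sh F1) + card (insert x ` (Sh F0 \<inter> Sh F1))"
    using insert.hyps(2) fin[of F0] fin[of F1] unfolding Sh_def
    by (subst card_image) (auto intro!: inj_onI card_Un_Int simp: insert_ident)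
  also have "\<dots> = card (Sh F0 \<union> Sh F1 \<union> insert x ` (Sh F0 \<inter> Sh F1))"
    using fin insert.hyps(2) unfolding Sh_def by (intro card_Un_disjoint[symmetric]) auto
  also have "\<dots> \<le> card {S. S \<subseteq> insert x X \<and> shatters F S}"
    using insert.hyps unfolding Sh_def F0_def F1_def
    by (intro card_mono) (auto intro: shatters_if_shatters_split shatters_insert_if_shatters_split)
  finally show ?case .
qed

lemma card_subsets_card_le:
  assumes "finite X"
  shows "card {S. S \<subseteq> X \<and> card S \<le> d} \<le> (card X + 1) ^ d"
proof -
  define D where "D = PiE {..<d} (\<lambda>_. insert None (Some ` X))"
  define set_of where "set_of f = {x. Some x \<in> f ` {..<d}}" for f :: "nat \<Rightarrow> 'a option"
  have "{S. S \<subseteq> X \<and> card S \<le> d} \<subseteq> set_of ` D"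
  proof
    fix S assume S: "S \<in> {S. S \<subseteq> X \<and> card S \<le> d}"
    then have "finite S"
      using assms finite_subset by auto
    then obtain b where b: "bij_betw b {0..<card S} S"
      using ex_bij_betw_nat_finite by blast
    define f where
      "f i = (if i < d then (if i < card S then Some (b i) else None) else undefined)" for i
    have "b i \<in> X" if "i < card S" for i
      using b S that by (auto simp: bij_betw_def)
    then have "f \<in> D"
      unfolding D_def f_def by (auto simp: PiE_iff extensional_def)
    moreover have "set_of f = b ` {0..<card S}"
      unfolding set_of_def f_def using S by (auto split: if_splits)
    ultimately show "S \<in> set_of ` D"
      using b by (auto simp: bij_betw_def)
  qed
  then have "card {S. S \<subseteq> X \<and> card S \<le> d} \<le> card (set_of ` D)"
    by (intro card_mono) (auto simp: D_def assms finite_PiE)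
  also have "\<dots> \<le> card D"
    by (rule card_image_le) (auto simp: D_def assms finite_PiE)
  also have "card D = (card X + 1) ^ d"
    unfolding D_def using assms by (simp add: card_PiE card_image)
  finally show ?thesis .
qed

theorem Sauer_Shelah:
  assumes "finite X" "\<And>S. S \<subseteq> X \<Longrightarrow> shatters F S \<Longrightarrow> card S \<le> d"
  shows "card {A \<inter> X | A. A \<in> F} \<le> (card X + 1) ^ d"
proof -
  have shatters_traces: "shatters F S" if sh: "shatters {A \<inter> X | A. A \<in> F} S" and "S \<subseteq> X" for S
    unfolding shatters_def
  proof (intro allI impI)
    fix T assume "T \<subseteq> S"
    then obtain A where "A \<in> F" "(A \<inter> X) \<inter> S = T"
      using shattersD[OF sh \<open>T \<subseteq> S\<close>] by blast
    then show "\<exists>A\<in>F. A \<inter> S = T"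
      using \<open>S \<subseteq> X\<close> by blast
  qed
  have "card {A \<inter> X | A. A \<in> F} \<le> card {S. S \<subseteq> X \<and> shatters {A \<inter> X | A. A \<in> F} S}"
    using assms(1) by (intro Pajor_card_shattered) auto
  also have "\<dots> \<le> card {S. S \<subseteq> X \<and> card S \<le> d}"
    using assms shatters_traces by (intro card_mono) auto
  also have "\<dots> \<le> (card X + 1) ^ d"
    using assms(1) by (rule card_subsets_card_le)
  finally show ?thesis .
qed

lemma shatters_halfspaces_card_le:
  fixes S :: "'a::euclidean_space set"
  assumes F: "F \<subseteq> {{x. a \<bullet> x \<le> b} | a b. True}" and "shatters F S"
  shows "card S \<le> DIM('a) + 1"
proof (rule ccontr)
  assume "\<not> card S \<le> DIM('a) + 1"
  then obtain S' where S': "S' \<subseteq> S" "card S' = DIM('a) + 2"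
    by (metis Suc_eq_plus1 add_Suc_right nat_1_add_1 not_less_eq_eq obtain_subset_with_card_n)
  then have "finite S'"
    by (metis card.infinite add_2_eq_Suc' zero_neq_numeral Suc_neq_Zero)
  then have "affine_dependent S'"
    using S' by (intro affine_dependent_biggerset) auto
  then obtain M N where MN: "M \<inter> N = {}" "M \<union> N = S'" "convex hull M \<inter> convex hull N \<noteq> {}"
    using Radon_partition[OF \<open>finite S'\<close>] by blast
  obtain A where "A \<in> F" "A \<inter> S' = M"
    using shattersD[OF shatters_subset[OF assms(2) S'(1)]] MN(2) by blast
  then obtain a b where ab: "A = {x. a \<bullet> x \<le> b}"
    using F by blast
  have "M \<subseteq> {x. a \<bullet> x \<le> b}" "N \<subseteq> {x. b < a \<bullet> x}"
    using MN \<open>A \<inter> S' = M\<close> ab by auto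
  then have "convex hull M \<subseteq> {x. a \<bullet> x \<le> b}" "convex hull N \<subseteq> {x. b < a \<bullet> x}"
    by (simp_all add: hull_minimal convex_halfspace_gt convex_halfspace_le)
  then show False
    using MN(3) by fastforce
qed

section \<open>Counting samples\<close>

(* Samples of size m drawn with replacement; probabilities are replaced by counts over this set. *)
abbreviation samples :: "nat \<Rightarrow> 'a set \<Rightarrow> (nat \<Rightarrow> 'a) set" where
  "samples m P \<equiv> PiE {..<m} (\<lambda>_. P)"

lemma card_samples_constrained:
  assumes "finite P" "J \<subseteq> {..<m}" "\<And>k. k \<in> J \<Longrightarrow> H k \<subseteq> P"
  shows "card {x \<in> samples m P. \<forall>k\<in>J. x k \<in> H k} = (\<Prod>k\<in>J. card (H k)) * card P ^ (m - card J)"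
proof -
  have "{x \<in> samples m P. \<forall>k\<in>J. x k \<in> H k} = PiE {..<m} (\<lambda>k. if k \<in> J then H k else P)"
    using assms(2,3) by (auto simp: PiE_iff extensional_def split: if_splits; blast)
  then have "card {x \<in> samples m P. \<forall>k\<in>J. x k \<in> H k} = (\<Prod>k<m. if k \<in> J then card (H k) else card P)"
    by (simp add: card_PiE if_distrib)
  also have "\<dots> = (\<Prod>k\<in>J. card (H k)) * card P ^ card ({..<m} - J)"
    using assms(2) by (simp add: prod.If_cases Int_absorb1 Diff_eq)
  also have "card ({..<m} - J) = m - card J"
    using assms(2) by (simp add: card_Diff_subset finite_subset)
  finally show ?thesis .
qed

lemma prod_of_bool_eq:
  "finite J \<Longrightarrow> (\<Prod>k\<in>J. of_bool (Q k)) = (of_bool (\<forall>k\<in>J. Q k) :: 'a::comm_semiring_1)"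
  by (induction J rule: finite_induct) simp_all

lemma sum_samples_prod_indicator:
  assumes "finite P" "P \<noteq> {}" "H \<subseteq> P" "J \<subseteq> {..<m}"
  shows "(\<Sum>y\<in>samples m P. \<Prod>k\<in>J. of_bool (y k \<in> H) :: real)
           = real (card P) ^ m * (real (card H) / real (card P)) ^ card J"
proof -
  have "finite J" "card J \<le> m"
    using assms(4) by (auto intro: finite_subset dest: card_mono[OF finite_lessThan])
  have "(\<Sum>y\<in>samples m P. \<Prod>k\<in>J. of_bool (y k \<in> H) :: real)
        = (\<Sum>y\<in>samples m P. of_bool (\<forall>k\<in>J. y k \<in> H))"
    using \<open>finite J\<close> by (simp add: prod_of_bool_eq)
  also have "\<dots> = real (card {y \<in> samples m P. \<forall>k\<in>J. y k \<in> H})"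
    using assms(1) by (simp add: finite_PiE Int_def)
  also have "\<dots> = real (card H ^ card J * card P ^ (m - card J))"
    using card_samples_constrained[of P J m "\<lambda>_. H"] assms by simp
  also have "\<dots> = real (card P) ^ m * (real (card H) / real (card P)) ^ card J"
    using \<open>card J \<le> m\<close> assms(1,2)
    by (simp add: power_divide field_simps flip: power_add)
  finally show ?thesis .
qed

lemma sum_samples_indicator_covariance:
  assumes "finite P" "P \<noteq> {}" "H \<subseteq> P" "j < m" "l < m"
  defines "p \<equiv> real (card H) / real (card P)"
  shows "(\<Sum>y\<in>samples m P. (of_bool (y j \<in> H) - p) * (of_bool (y l \<in> H) - p))
           = (if j = l then real (card P) ^ m * p * (1 - p) else 0)"
proof -
  define N where "N = real (card P) ^ m"
  define e where "e k y = (of_bool (y k \<in> H) :: real)" for k :: nat and y :: "nat \<Rightarrow> 'a"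
  have moment: "(\<Sum>y\<in>samples m P. \<Prod>k\<in>J. e k y) = N * p ^ card J" if "J \<subseteq> {..<m}" for J
    unfolding e_def N_def p_def using sum_samples_prod_indicator[OF assms(1-3) that] .
  have mean: "(\<Sum>y\<in>samples m P. e k y) = N * p" if "k < m" for k
    using moment[of "{k}"] that by simp
  have second: "(\<Sum>y\<in>samples m P. e j y * e l y) = (if j = l then N * p else N * p\<^sup>2)"
  proof (cases "j = l")
    case True
    have "(\<Sum>y\<in>samples m P. e j y * e j y) = (\<Sum>y\<in>samples m P. \<Prod>k\<in>{j}. e k y)"
      by (simp add: e_def flip: of_bool_conj)
    then show ?thesis
      using moment[of "{j}"] assms(4) True by simp
  next
    case False
    then have "e j y * e l y = (\<Prod>k\<in>{j, l}. e k y)" for y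
      by simp
    then show ?thesis
      using moment[of "{j, l}"] assms(4,5) False by (simp add: power2_eq_square)
  qed
  have "real (card (samples m P)) = N"
    unfolding N_def using assms(1) by (simp add: card_PiE)
  then have "(\<Sum>y\<in>samples m P. (e j y - p) * (e l y - p))
        = (\<Sum>y\<in>samples m P. e j y * e l y) - p * (\<Sum>y\<in>samples m P. e j y)
            - p * (\<Sum>y\<in>samples m P. e l y) + N * p\<^sup>2"
    by (simp add: algebra_simps sum.distrib sum_subtractf sum_distrib_left power2_eq_square)
  also have "\<dots> = (if j = l then N * p * (1 - p) else 0)"
    unfolding second mean[OF assms(4)] mean[OF assms(5)]
    by (simp add: algebra_simps power2_eq_square)
  finally show ?thesis
    unfolding e_def N_def .
qed

lemma sum_samples_hits_variance:
  assumes "finite P" "P \<noteq> {}" "H \<subseteq> P"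
  defines "p \<equiv> real (card H) / real (card P)"
  shows "(\<Sum>y\<in>samples m P. (real (card {j\<in>{..<m}. y j \<in> H}) - real m * p)\<^sup>2)
           = real (card P) ^ m * real m * p * (1 - p)"
proof -
  define d where "d j y = (of_bool (y j \<in> H) :: real) - p" for j :: nat and y :: "nat \<Rightarrow> 'a"
  have "real (card {j\<in>{..<m}. y j \<in> H}) - real m * p = (\<Sum>j<m. d j y)" for y
    unfolding d_def by (simp add: sum_subtractf Int_def)
  then have "(\<Sum>y\<in>samples m P. (real (card {j\<in>{..<m}. y j \<in> H}) - real m * p)\<^sup>2)
        = (\<Sum>y\<in>samples m P. \<Sum>j<m. \<Sum>l<m. d j y * d l y)"
    by (simp add: power2_eq_square sum_product)
  also have "\<dots> = (\<Sum>j<m. \<Sum>l<m. \<Sum>y\<in>samples m P. d j y * d l y)"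
    by (subst sum.swap) (simp add: sum.swap[of _ "samples m P"])
  also have "\<dots> = (\<Sum>j<m. real (card P) ^ m * p * (1 - p))"
    unfolding d_def p_def using sum_samples_indicator_covariance[OF assms(1-3)]
    by (simp add: sum.delta)
  finally show ?thesis
    by simp
qed

lemma card_samples_hits_deviation_le:
  fixes t :: real
  assumes "finite P" "P \<noteq> {}" "H \<subseteq> P" "0 \<le> t"
  defines "p \<equiv> real (card H) / real (card P)"
  shows "real (card {y \<in> samples m P. t \<le> \<bar>real (card {j\<in>{..<m}. y j \<in> H}) - real m * p\<bar>}) * t\<^sup>2
           \<le> real (card P) ^ m * real m * p * (1 - p)"
proof -
  define X where "X y = real (card {j\<in>{..<m}. y j \<in> H}) - real m * p" for y :: "nat \<Rightarrow> 'a"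
  define L where "L = {y \<in> samples m P. t \<le> \<bar>X y\<bar>}"
  have "real (card L) * t\<^sup>2 = (\<Sum>y\<in>L. t\<^sup>2)"
    by simp
  also have "\<dots> \<le> (\<Sum>y\<in>L. (X y)\<^sup>2)"
    unfolding L_def using assms(4)
    by (intro sum_mono) (metis (mono_tags) mem_Collect_eq power2_abs power_mono)
  also have "\<dots> \<le> (\<Sum>y\<in>samples m P. (X y)\<^sup>2)"
    unfolding L_def using assms(1) by (intro sum_mono2) (auto simp: finite_PiE)
  also have "\<dots> = real (card P) ^ m * real m * p * (1 - p)"
    unfolding X_def p_def using assms(1-3) by (rule sum_samples_hits_variance)
  finally show ?thesis
    unfolding L_def X_def .
qed

lemma card_samples_few_hits_le:
  assumes "finite P" "P \<noteq> {}" "H \<subseteq> P" "card P \<le> 4 * card H" "real k \<le> real m / 4"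
  shows "real (card {y \<in> samples m P. card {j\<in>{..<m}. y j \<in> H} < k}) * (real m / 4 - real k)\<^sup>2
           \<le> real (card P) ^ m * real m / 4"
proof -
  define p where "p = real (card H) / real (card P)"
  define hits where "hits y = real (card {j\<in>{..<m}. y j \<in> H})" for y :: "nat \<Rightarrow> 'a"
  have "real (card P) > 0"
    using assms(1,2) by (simp add: card_gt_0_iff)
  then have "1/4 \<le> p"
    unfolding p_def using assms(4) by (simp add: field_simps)
  have "p * (1 - p) \<le> 1/4"
    using zero_le_power2[of "p - 1/2"] by (simp add: power2_eq_square algebra_simps)
  have "real m / 4 - real k \<le> \<bar>hits y - real m * p\<bar>" if "hits y < real k" for y
    using that \<open>1/4 \<le> p\<close> mult_left_mono[OF \<open>1/4 \<le> p\<close>, of "real m"] by simp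
  then have "{y \<in> samples m P. card {j\<in>{..<m}. y j \<in> H} < k}
        \<subseteq> {y \<in> samples m P. real m / 4 - real k \<le> \<bar>hits y - real m * p\<bar>}"
    unfolding hits_def by auto
  then have "real (card {y \<in> samples m P. card {j\<in>{..<m}. y j \<in> H} < k}) * (real m / 4 - real k)\<^sup>2
        \<le> real (card {y \<in> samples m P. real m / 4 - real k \<le> \<bar>hits y - real m * p\<bar>})
            * (real m / 4 - real k)\<^sup>2"
    using assms(1) by (intro mult_right_mono of_nat_mono card_mono) (simp_all add: finite_PiE)
  also have "\<dots> \<le> real (card P) ^ m * real m * (p * (1 - p))"
    using card_samples_hits_deviation_le[OF assms(1-3), of "real m / 4 - real k" m] assms(5)
    unfolding p_def hits_def by (simp add: mult.assoc)
  also have "\<dots> \<le> real (card P) ^ m * real m * (1/4)"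
    using \<open>p * (1 - p) \<le> 1/4\<close> by (intro mult_left_mono) simp_all
  finally show ?thesis
    by simp
qed

lemma card_samples_many_hits_ge:
  assumes "finite P" "P \<noteq> {}" "card P \<le> 4 * card (K \<inter> P)"
  shows "31 / 32 * real (card P) ^ 512
           \<le> real (card {y \<in> samples 512 P. 64 \<le> card {j\<in>{..<512}. y j \<in> K}})"
proof -
  define m :: nat where "m = 512"
  define \<Omega> where "\<Omega> = samples m P"
  define Few where "Few = {y \<in> \<Omega>. card {j\<in>{..<m}. y j \<in> K \<inter> P} < 64}"
  have fin: "finite \<Omega>"
    unfolding \<Omega>_def using assms(1) by (simp add: finite_PiE)
  have "real (card Few) * 64\<^sup>2 \<le> real (card P) ^ m * 128"
    using card_samples_few_hits_le[OF assms(1,2) _ assms(3), of 64 m]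
    unfolding Few_def \<Omega>_def m_def by simp
  then have "real (card Few) \<le> real (card P) ^ m / 32"
    by simp
  moreover have many: "{y \<in> \<Omega>. 64 \<le> card {j\<in>{..<m}. y j \<in> K}} = \<Omega> - Few"
  proof -
    have "{j. j < m \<and> y j \<in> K} = {j. j < m \<and> y j \<in> K \<inter> P}" if "y \<in> \<Omega>" for y
      using that unfolding \<Omega>_def by (auto dest: PiE_mem)
    then show ?thesis
      unfolding Few_def by auto
  qed
  moreover have "real (card (\<Omega> - Few)) = real (card \<Omega>) - real (card Few)"
    using fin by (simp add: Few_def card_Diff_subset of_nat_diff card_mono)
  moreover have "real (card \<Omega>) = real (card P) ^ m"
    unfolding \<Omega>_def using assms(1) by (simp add: card_PiE)
  ultimately have "31 / 32 * real (card P) ^ m \<le> real (card {y \<in> \<Omega>. 64 \<le> card {j\<in>{..<m}. y j \<in> K}})"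
    unfolding many by linarith
  then show ?thesis
    unfolding \<Omega>_def m_def .
qed

lemma card_samples_small_range_le:
  assumes "finite P"
  shows "card {x \<in> samples m P. card (x ` {..<m}) \<le> k} \<le> (card P + 1) ^ k * k ^ m"
proof -
  define \<A> where "\<A> = {A. A \<subseteq> P \<and> card A \<le> k}"
  have fin\<A>: "finite \<A>"
    unfolding \<A>_def using assms by simp
  have "{x \<in> samples m P. card (x ` {..<m}) \<le> k} \<subseteq> (\<Union>A\<in>\<A>. samples m A)"
  proof
    fix x assume x: "x \<in> {x \<in> samples m P. card (x ` {..<m}) \<le> k}"
    then have "x ` {..<m} \<in> \<A>"
      unfolding \<A>_def by (auto dest: PiE_mem)
    moreover have "x \<in> samples m (x ` {..<m})"
      using x by (auto simp: PiE_iff)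
    ultimately show "x \<in> (\<Union>A\<in>\<A>. samples m A)"
      by blast
  qed
  then have "card {x \<in> samples m P. card (x ` {..<m}) \<le> k} \<le> card (\<Union>A\<in>\<A>. samples m A)"
    using fin\<A> assms by (intro card_mono) (auto simp: \<A>_def intro!: finite_PiE intro: finite_subset)
  also have "\<dots> \<le> (\<Sum>A\<in>\<A>. card (samples m A))"
    using fin\<A> by (rule card_UN_le)
  also have "\<dots> \<le> (\<Sum>A\<in>\<A>. k ^ m)"
    using assms by (intro sum_mono) (auto simp: \<A>_def card_PiE power_mono intro: finite_subset)
  also have "\<dots> = card \<A> * k ^ m"
    by simp
  also have "\<dots> \<le> (card P + 1) ^ k * k ^ m"
    unfolding \<A>_def using card_subsets_card_le[OF assms] by simp
  finally show ?thesis .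
qed

lemma card_samples_fixing_le:
  assumes "finite P" "T \<subseteq> P" "\<And>t. t \<in> T \<Longrightarrow> \<iota> t < m"
  shows "card {x \<in> samples m P. \<forall>t\<in>T. x (\<iota> t) = t} \<le> card P ^ (m - card T)"
proof (cases "inj_on \<iota> T")
  case True
  have "{x \<in> samples m P. \<forall>t\<in>T. x (\<iota> t) = t}
        = {x \<in> samples m P. \<forall>k\<in>\<iota> ` T. x k \<in> {the_inv_into T \<iota> k}}"
    using True by (auto simp: the_inv_into_f_f)
  also have "card \<dots> = card P ^ (m - card T)"
    using assms True
    by (subst card_samples_constrained) (auto simp: card_image the_inv_into_f_f)
  finally show ?thesis
    by simp
next
  case False
  then obtain t t' where "t \<in> T" "t' \<in> T" "t \<noteq> t'" "\<iota> t = \<iota> t'"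
    unfolding inj_on_def by blast
  then have "\<not> (\<forall>t\<in>T. x (\<iota> t) = t)" for x
    by metis
  then have "{x \<in> samples m P. \<forall>t\<in>T. x (\<iota> t) = t} = {}"
    by blast
  then show ?thesis
    by (metis card.empty zero_le)
qed

lemma card_samples_covering_le:
  assumes "finite P" "T \<subseteq> P"
  shows "card {x \<in> samples m P. T \<subseteq> x ` {..<m}} \<le> m ^ card T * card P ^ (m - card T)"
proof -
  define I where "I = PiE T (\<lambda>_. {..<m})"
  define Fix where "Fix \<iota> = {x \<in> samples m P. \<forall>t\<in>T. x (\<iota> t) = t}" for \<iota>
  have "finite T"
    using assms finite_subset by blast
  have finI: "finite I"
    unfolding I_def using \<open>finite T\<close> by (simp add: finite_PiE)
  have "{x \<in> samples m P. T \<subseteq> x ` {..<m}} \<subseteq> (\<Union>\<iota>\<in>I. Fix \<iota>)"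
  proof
    fix x assume x: "x \<in> {x \<in> samples m P. T \<subseteq> x ` {..<m}}"
    then have "\<forall>t\<in>T. \<exists>i<m. x i = t"
      by blast
    then obtain \<iota> where \<iota>: "\<forall>t\<in>T. \<iota> t < m \<and> x (\<iota> t) = t"
      by metis
    then have "restrict \<iota> T \<in> I" "x \<in> Fix (restrict \<iota> T)"
      using x unfolding I_def Fix_def by auto
    then show "x \<in> (\<Union>\<iota>\<in>I. Fix \<iota>)"
      by blast
  qed
  then have "card {x \<in> samples m P. T \<subseteq> x ` {..<m}} \<le> card (\<Union>\<iota>\<in>I. Fix \<iota>)"
    using finI assms(1) by (intro card_mono) (auto simp: Fix_def finite_PiE)
  also have "\<dots> \<le> (\<Sum>\<iota>\<in>I. card (Fix \<iota>))"
    using finI by (rule card_UN_le)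
  also have "\<dots> \<le> (\<Sum>\<iota>\<in>I. card P ^ (m - card T))"
    unfolding Fix_def I_def using assms by (intro sum_mono card_samples_fixing_le) auto
  also have "\<dots> = m ^ card T * card P ^ (m - card T)"
    unfolding I_def using \<open>finite T\<close> by (simp add: card_PiE)
  finally show ?thesis .
qed

section \<open>Epsilon-nets by double sampling\<close>

definition swap_at :: "nat set \<Rightarrow> (nat \<Rightarrow> 'a) \<times> (nat \<Rightarrow> 'a) \<Rightarrow> (nat \<Rightarrow> 'a) \<times> (nat \<Rightarrow> 'a)" where
  "swap_at s w =
     ((\<lambda>i. if i \<in> s then snd w i else fst w i), (\<lambda>i. if i \<in> s then fst w i else snd w i))"

lemma swap_at_swap_at [simp]: "swap_at s (swap_at s w) = w"
  by (cases w) (simp add: swap_at_def fun_eq_iff)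

lemma swap_at_samples:
  "w \<in> samples m P \<times> samples m P \<Longrightarrow> swap_at s w \<in> samples m P \<times> samples m P"
  by (cases w) (auto simp: swap_at_def PiE_iff extensional_def)

lemma card_subsets_fixed_on_le:
  assumes "D \<subseteq> {..<m}" "\<And>s. s \<in> S \<Longrightarrow> s \<subseteq> {..<m} \<and> s \<inter> D = D0"
  shows "card S \<le> 2 ^ (m - card D)"
proof -
  have "S \<subseteq> (\<lambda>u. u \<union> D0) ` Pow ({..<m} - D)"
  proof
    fix s assume "s \<in> S"
    then show "s \<in> (\<lambda>u. u \<union> D0) ` Pow ({..<m} - D)"
      using assms(2)[of s] by (intro image_eqI[of s _ "s - D"]) auto
  qed
  then have "card S \<le> card ((\<lambda>u. u \<union> D0) ` Pow ({..<m} - D))"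
    by (intro card_mono) simp_all
  also have "\<dots> \<le> card (Pow ({..<m} - D))"
    by (rule card_image_le) simp
  also have "\<dots> = 2 ^ (m - card D)"
    using assms(1) by (simp add: card_Pow card_Diff_subset finite_subset)
  finally show ?thesis .
qed

lemma card_swaps_separating_le:
  "card {s \<in> Pow {..<m}. (\<forall>i<m. fst (swap_at s w) i \<notin> K)
                         \<and> t \<le> card {j\<in>{..<m}. snd (swap_at s w) j \<in> K}}
     \<le> 2 ^ (m - t)"
  (is "card ?Sw \<le> _")
proof (cases "?Sw = {}")
  case False
  define D where "D = {i\<in>{..<m}. (fst w i \<in> K) \<noteq> (snd w i \<in> K)}"
  have outside: "(if i \<in> s then snd w i else fst w i) \<notin> K" if "s \<in> ?Sw" "i < m" for s i
    using that unfolding swap_at_def by auto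
  obtain s0 where s0: "s0 \<in> ?Sw"
    using False by blast
  have "{j\<in>{..<m}. snd (swap_at s0 w) j \<in> K} \<subseteq> D"
  proof
    fix j assume "j \<in> {j\<in>{..<m}. snd (swap_at s0 w) j \<in> K}"
    then show "j \<in> D"
      using outside[OF s0, of j] unfolding D_def swap_at_def by (auto split: if_splits)
  qed
  then have "card {j\<in>{..<m}. snd (swap_at s0 w) j \<in> K} \<le> card D"
    by (intro card_mono) (simp_all add: D_def)
  moreover have "t \<le> card {j\<in>{..<m}. snd (swap_at s0 w) j \<in> K}"
    using s0 by blast
  ultimately have "t \<le> card D"
    by linarith
  have "s \<inter> D = {i\<in>D. fst w i \<in> K}" if "s \<in> ?Sw" for s
  proof (intro equalityI subsetI)
    fix i assume "i \<in> s \<inter> D"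
    then show "i \<in> {i\<in>D. fst w i \<in> K}"
      using outside[OF that, of i] unfolding D_def by auto
  next
    fix i assume "i \<in> {i\<in>D. fst w i \<in> K}"
    then show "i \<in> s \<inter> D"
      using outside[OF that, of i] unfolding D_def by (auto split: if_splits)
  qed
  then have "card ?Sw \<le> 2 ^ (m - card D)"
    by (intro card_subsets_fixed_on_le[of D]) (auto simp: D_def)
  also have "\<dots> \<le> 2 ^ (m - t)"
    using \<open>t \<le> card D\<close> by (intro power_increasing) auto
  finally show ?thesis .
next
  case True
  then show ?thesis
    by (metis card.empty zero_le)
qed

lemma sum_card_filter_swap:
  assumes "finite A" "finite B"
  shows "(\<Sum>a\<in>A. card {b\<in>B. Q a b}) = (\<Sum>b\<in>B. card {a\<in>A. Q a b})"
proof -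
  have "(\<Sum>a\<in>A. card {b\<in>B. Q a b}) = (\<Sum>a\<in>A. \<Sum>b\<in>B. of_bool (Q a b))"
    using assms(2) by (simp add: Int_def)
  also have "\<dots> = (\<Sum>b\<in>B. \<Sum>a\<in>A. of_bool (Q a b))"
    by (rule sum.swap)
  also have "\<dots> = (\<Sum>b\<in>B. card {a\<in>A. Q a b})"
    using assms(1) by (simp add: Int_def)
  finally show ?thesis .
qed

lemma card_swaps_some_separating_le:
  fixes w :: "(nat \<Rightarrow> 'a) \<times> (nat \<Rightarrow> 'a)" and m :: nat
  defines "Q \<equiv> fst w ` {..<m} \<union> snd w ` {..<m}"
  shows "card {s \<in> Pow {..<m}. \<exists>K\<in>\<K>. (\<forall>i<m. fst (swap_at s w) i \<notin> K)
                                    \<and> t \<le> card {j\<in>{..<m}. snd (swap_at s w) j \<in> K}}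
           \<le> card {K \<inter> Q | K. K \<in> \<K>} * 2 ^ (m - t)"
proof -
  define Sw where "Sw K = {s \<in> Pow {..<m}. (\<forall>i<m. fst (swap_at s w) i \<notin> K)
                                         \<and> t \<le> card {j\<in>{..<m}. snd (swap_at s w) j \<in> K}}" for K
  have in_Q: "fst (swap_at s w) i \<in> Q" "snd (swap_at s w) i \<in> Q" if "i < m" for s i
    using that unfolding Q_def swap_at_def by auto
  have "Sw K \<subseteq> Sw (K \<inter> Q)" for K
  proof
    fix s assume "s \<in> Sw K"
    moreover have "{j\<in>{..<m}. snd (swap_at s w) j \<in> K \<inter> Q} = {j\<in>{..<m}. snd (swap_at s w) j \<in> K}"
      using in_Q by auto
    ultimately show "s \<in> Sw (K \<inter> Q)"
      unfolding Sw_def by simp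
  qed
  then have "{s \<in> Pow {..<m}. \<exists>K\<in>\<K>. (\<forall>i<m. fst (swap_at s w) i \<notin> K)
                                    \<and> t \<le> card {j\<in>{..<m}. snd (swap_at s w) j \<in> K}}
             \<subseteq> (\<Union>K'\<in>{K \<inter> Q | K. K \<in> \<K>}. Sw K')"
    unfolding Sw_def by blast
  then have "card {s \<in> Pow {..<m}. \<exists>K\<in>\<K>. (\<forall>i<m. fst (swap_at s w) i \<notin> K)
                                    \<and> t \<le> card {j\<in>{..<m}. snd (swap_at s w) j \<in> K}}
             \<le> card (\<Union>K'\<in>{K \<inter> Q | K. K \<in> \<K>}. Sw K')"
    by (intro card_mono) (auto simp: Sw_def intro: finite_subset[of _ "Pow {..<m}"])
  also have "\<dots> \<le> (\<Sum>K'\<in>{K \<inter> Q | K. K \<in> \<K>}. card (Sw K'))"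
    by (rule card_UN_le, rule finite_subset[of _ "Pow Q"]) (auto simp: Q_def)
  also have "\<dots> \<le> (\<Sum>K'\<in>{K \<inter> Q | K. K \<in> \<K>}. 2 ^ (m - t))"
    unfolding Sw_def by (intro sum_mono card_swaps_separating_le)
  finally show ?thesis
    by simp
qed

(* Swapping the coordinates in s between the two samples is a bijection of pairs, and for a fixed
   pair only 2^(m-t) swaps per trace K \<inter> Q keep the first sample off K while t points of the
   second fall into K. *)
lemma card_double_samples_le:
  fixes \<K> :: "'a set set" and m t :: nat
  assumes "finite P"
    and traces: "\<And>Q. Q \<subseteq> P \<Longrightarrow> card Q \<le> 2 * m \<Longrightarrow> card {K \<inter> Q | K. K \<in> \<K>} \<le> B"
  defines "E \<equiv> {w \<in> samples m P \<times> samples m P.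
                  \<exists>K\<in>\<K>. (\<forall>i<m. fst w i \<notin> K) \<and> t \<le> card {j\<in>{..<m}. snd w j \<in> K}}"
  shows "card E * 2 ^ m \<le> card (samples m P) ^ 2 * B * 2 ^ (m - t)"
proof -
  define \<Omega> where "\<Omega> = samples m P"
  have fin: "finite (\<Omega> \<times> \<Omega>)"
    unfolding \<Omega>_def using assms(1) by (simp add: finite_PiE)
  have E_\<Omega>: "E \<subseteq> \<Omega> \<times> \<Omega>"
    unfolding E_def \<Omega>_def by blast
  have swap_invariant: "card {w \<in> \<Omega> \<times> \<Omega>. swap_at s w \<in> E} = card E" for s
  proof -
    have inj: "inj_on (swap_at s) {w \<in> \<Omega> \<times> \<Omega>. swap_at s w \<in> E}"
      by (rule inj_onI) (metis swap_at_swap_at)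
    have img: "swap_at s ` {w \<in> \<Omega> \<times> \<Omega>. swap_at s w \<in> E} = E"
    proof (intro equalityI subsetI)
      fix e assume "e \<in> E"
      then have "swap_at s e \<in> {w \<in> \<Omega> \<times> \<Omega>. swap_at s w \<in> E}"
        using E_\<Omega> swap_at_samples[of e m P s] unfolding \<Omega>_def by auto
      then show "e \<in> swap_at s ` {w \<in> \<Omega> \<times> \<Omega>. swap_at s w \<in> E}"
        by (rule rev_image_eqI) simp
    qed auto
    show ?thesis
      using card_image[OF inj] unfolding img by simp
  qed
  have few_swaps: "card {s \<in> Pow {..<m}. swap_at s w \<in> E} \<le> B * 2 ^ (m - t)" if "w \<in> \<Omega> \<times> \<Omega>" for w
  proof -
    define Q where "Q = fst w ` {..<m} \<union> snd w ` {..<m}"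
    have "fst w \<in> \<Omega>" "snd w \<in> \<Omega>"
      using that by auto
    then have "Q \<subseteq> P"
      unfolding Q_def \<Omega>_def by (blast dest: PiE_mem)
    moreover have "card Q \<le> 2 * m"
      using card_Un_le[of "fst w ` {..<m}" "snd w ` {..<m}"]
        card_image_le[of "{..<m}" "fst w"] card_image_le[of "{..<m}" "snd w"]
      unfolding Q_def by simp
    ultimately have bound: "card {K \<inter> Q | K. K \<in> \<K>} * 2 ^ (m - t) \<le> B * 2 ^ (m - t)"
      by (intro mult_le_mono1 traces)
    have "swap_at s w \<in> samples m P \<times> samples m P" for s
      using swap_at_samples that unfolding \<Omega>_def by blast
    then have eq: "{s \<in> Pow {..<m}. swap_at s w \<in> E}
        = {s \<in> Pow {..<m}. \<exists>K\<in>\<K>. (\<forall>i<m. fst (swap_at s w) i \<notin> K)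
                                 \<and> t \<le> card {j\<in>{..<m}. snd (swap_at s w) j \<in> K}}"
      unfolding E_def by simp
    show ?thesis
      unfolding eq using order_trans[OF card_swaps_some_separating_le bound[unfolded Q_def]] .
  qed
  have "card E * 2 ^ m = (\<Sum>s\<in>Pow {..<m}. card {w \<in> \<Omega> \<times> \<Omega>. swap_at s w \<in> E})"
    by (simp add: swap_invariant card_Pow)
  also have "\<dots> = (\<Sum>w\<in>\<Omega> \<times> \<Omega>. card {s \<in> Pow {..<m}. swap_at s w \<in> E})"
    using fin by (intro sum_card_filter_swap) simp_all
  also have "\<dots> \<le> (\<Sum>w\<in>\<Omega> \<times> \<Omega>. B * 2 ^ (m - t))"
    by (intro sum_mono few_swaps)
  also have "\<dots> = card \<Omega> ^ 2 * B * 2 ^ (m - t)"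
    by (simp add: card_cartesian_product power2_eq_square)
  finally show ?thesis
    unfolding \<Omega>_def .
qed

lemma card_double_samples_vc_le:
  fixes \<K> :: "'a set set" and m t d :: nat
  assumes "finite P" "\<And>S. S \<subseteq> P \<Longrightarrow> shatters \<K> S \<Longrightarrow> card S \<le> d"
  defines "E \<equiv> {w \<in> samples m P \<times> samples m P.
                  \<exists>K\<in>\<K>. (\<forall>i<m. fst w i \<notin> K) \<and> t \<le> card {j\<in>{..<m}. snd w j \<in> K}}"
  shows "card E * 2 ^ m \<le> card (samples m P) ^ 2 * (2 * m + 1) ^ d * 2 ^ (m - t)"
  unfolding E_def
proof (rule card_double_samples_le[OF assms(1)])
  fix Q assume "Q \<subseteq> P" "card Q \<le> 2 * m"
  then have "card {K \<inter> Q | K. K \<in> \<K>} \<le> (card Q + 1) ^ d"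
    using assms(1,2) by (intro Sauer_Shelah) (auto intro: finite_subset)
  also have "\<dots> \<le> (2 * m + 1) ^ d"
    using \<open>card Q \<le> 2 * m\<close> by (intro power_mono) auto
  finally show "card {K \<inter> Q | K. K \<in> \<K>} \<le> (2 * m + 1) ^ d" .
qed

(* A sample x missing some K in \<K>, paired with any of the at least 31/32 of all samples that hit
   K 64 times, lies in the double-sample set E; comparing with the upper bound for E gives the
   claim. *)
lemma card_samples_missing_heavy_set_le:
  fixes \<K> :: "'a set set"
  assumes "finite P" "P \<noteq> {}"
    and vc: "\<And>S. S \<subseteq> P \<Longrightarrow> shatters \<K> S \<Longrightarrow> card S \<le> 4"
    and heavy: "\<And>K. K \<in> \<K> \<Longrightarrow> card P \<le> 4 * card (K \<inter> P)"
  shows "real (card {x \<in> samples 512 P. \<exists>K\<in>\<K>. \<forall>i<512. x i \<notin> K}) \<le> real (card P) ^ 512 / 4"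
proof -
  define m :: nat where "m = 512"
  define \<Omega> where "\<Omega> = samples m P"
  define N where "N = real (card P) ^ m"
  define Fail where "Fail = {x \<in> \<Omega>. \<exists>K\<in>\<K>. \<forall>i<m. x i \<notin> K}"
  define E where "E = {w \<in> \<Omega> \<times> \<Omega>. \<exists>K\<in>\<K>. (\<forall>i<m. fst w i \<notin> K) \<and> 64 \<le> card {j\<in>{..<m}. snd w j \<in> K}}"
  have "N > 0"
    unfolding N_def using assms(1,2) by (simp add: card_gt_0_iff)
  have fin: "finite \<Omega>"
    unfolding \<Omega>_def using assms(1) by (simp add: finite_PiE)
  have card_\<Omega>: "real (card \<Omega>) = N"
    unfolding \<Omega>_def N_def using assms(1) by (simp add: card_PiE)
  have upper: "real (card E) * 2 ^ 64 \<le> N\<^sup>2 * 1025 ^ 4"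
  proof -
    have "(card E * 2 ^ 64) * 2 ^ (m - 64) \<le> (card \<Omega> ^ 2 * 1025 ^ 4) * 2 ^ (m - 64)"
      using card_double_samples_vc_le[OF assms(1) vc, where m = m and t = 64]
      unfolding E_def \<Omega>_def m_def by (simp only: mult.assoc flip: power_add) simp
    then have "card E * 2 ^ 64 \<le> card \<Omega> ^ 2 * 1025 ^ 4"
      by (simp only: mult_le_cancel2) simp
    then have "real (card E * 2 ^ 64) \<le> real (card \<Omega> ^ 2 * 1025 ^ 4)"
      by (simp only: of_nat_le_iff)
    then show ?thesis
      using card_\<Omega> by simp
  qed
  have "\<forall>x\<in>Fail. \<exists>K. K \<in> \<K> \<and> (\<forall>i<m. x i \<notin> K)"
    unfolding Fail_def by blast
  from bchoice[OF this] obtain K_of where K_of: "\<forall>x\<in>Fail. K_of x \<in> \<K> \<and> (\<forall>i<m. x i \<notin> K_of x)"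
    by blast
  define Y where "Y x = {y \<in> \<Omega>. 64 \<le> card {j\<in>{..<m}. y j \<in> K_of x}}" for x
  have "Sigma Fail Y \<subseteq> E"
  proof
    fix w assume "w \<in> Sigma Fail Y"
    then obtain x y where w: "w = (x, y)" "x \<in> Fail" "y \<in> Y x"
      by blast
    then have "x \<in> \<Omega>" "y \<in> \<Omega>" "K_of x \<in> \<K>" "\<forall>i<m. x i \<notin> K_of x"
      "64 \<le> card {j\<in>{..<m}. y j \<in> K_of x}"
      using K_of unfolding Fail_def Y_def by auto
    then show "w \<in> E"
      unfolding E_def w mem_Collect_eq fst_conv snd_conv by blast
  qed
  then have "real (card (Sigma Fail Y)) \<le> real (card E)"
    using fin unfolding E_def by (intro of_nat_mono card_mono) auto
  moreover have "real (card Fail) * (31 / 32 * N) \<le> real (card (Sigma Fail Y))"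
  proof -
    have "real (card Fail) * (31 / 32 * N) = (\<Sum>x\<in>Fail. 31 / 32 * N)"
      by simp
    also have "\<dots> \<le> (\<Sum>x\<in>Fail. real (card (Y x)))"
      using card_samples_many_hits_ge[OF assms(1,2) heavy] K_of
      unfolding Y_def \<Omega>_def N_def m_def by (intro sum_mono) simp
    also have "\<dots> = real (card (Sigma Fail Y))"
      using fin unfolding Fail_def Y_def by (simp add: card_SigmaI)
    finally show ?thesis .
  qed
  ultimately have "real (card Fail) * (31 / 32 * N) * 2 ^ 64 \<le> N\<^sup>2 * 1025 ^ 4"
    using upper by (smt (verit) mult_right_mono zero_le_power)
  then have "real (card Fail) * (31 / 32 * 2 ^ 64) \<le> N * 1025 ^ 4"
    using \<open>N > 0\<close> by (simp add: power2_eq_square algebra_simps)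
  then have "real (card Fail) \<le> N / 4"
    using \<open>N > 0\<close> by simp
  then show ?thesis
    unfolding Fail_def \<Omega>_def N_def m_def .
qed

section \<open>Triangles crossing a segment\<close>

lemma segment_meets_facet_of_convex_hull:
  fixes M :: "'a::euclidean_space set"
  assumes "finite M" "DIM('a) \<le> card M" "c \<in> convex hull M" "r \<notin> convex hull M"
  shows "\<exists>T\<subseteq>M. card T = DIM('a) \<and> convex hull T \<inter> closed_segment c r \<noteq> {}"
proof -
  obtain S where S: "finite S" "S \<subseteq> M" "card S \<le> DIM('a) + 1" "c \<in> convex hull S"
    using assms(3) caratheodory[of M] by auto
  consider "card S \<le> DIM('a)" | "card S = Suc DIM('a)"
    using S(3) by linarith
  then show ?thesis
  proof cases
    case 1
    have "DIM('a) - card S \<le> card (M - S)"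
      using S assms(1,2) by (simp add: card_Diff_subset)
    then obtain S' where S': "S' \<subseteq> M - S" "card S' = DIM('a) - card S"
      by (meson obtain_subset_with_card_n)
    have "card (S \<union> S') = DIM('a)"
      using S S' 1 assms(1) by (subst card_Un_disjoint) (auto intro: finite_subset)
    moreover have "c \<in> convex hull (S \<union> S')"
      using S(4) hull_mono[of S "S \<union> S'"] by auto
    ultimately show ?thesis
      using S(2) S'(1) by (intro exI[of _ "S \<union> S'"]) auto
  next
    case 2
    have "r \<notin> convex hull S"
      using assms(4) hull_mono[OF S(2)] by auto
    then have "closed_segment c r \<inter> frontier (convex hull S) \<noteq> {}"
      using S(4) by (intro connected_Int_frontier) auto
    then obtain a where "a \<in> S" "convex hull (S - {a}) \<inter> closed_segment c r \<noteq> {}"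
      unfolding frontier_of_convex_hull[OF 2] by blast
    moreover have "card (S - {a}) = DIM('a)"
      using 2 \<open>a \<in> S\<close> by simp
    ultimately show ?thesis
      using S(2) by (intro exI[of _ "S - {a}"]) auto
  qed
qed

lemma separating_hyperplane_convex_hull:
  fixes M :: "'a::euclidean_space set"
  assumes "finite M" "M \<noteq> {}" "c \<notin> convex hull M"
  shows "\<exists>a. a \<noteq> 0 \<and> (\<forall>p\<in>M. a \<bullet> c < a \<bullet> p)"
proof -
  obtain a b where ab: "a \<bullet> c < b" "\<forall>z\<in>convex hull M. b < a \<bullet> z"
    using separating_hyperplane_closed_point[OF convex_convex_hull _ assms(3)] assms(1)
    by (meson compact_imp_closed finite_imp_compact_convex_hull)
  then have "\<forall>p\<in>M. a \<bullet> c < a \<bullet> p"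
    by (meson hull_inc order.strict_trans)
  moreover have "a \<noteq> 0"
    using ab assms(2) by (metis all_not_in_conv hull_inc inner_zero_left less_asym)
  ultimately show ?thesis by blast
qed

lemma centerpoint_halfspace_card:
  assumes "centerpoint P c" "a \<noteq> 0"
  shows "card P \<le> 4 * card {p \<in> P. a \<bullet> p \<le> a \<bullet> c}"
proof -
  have "real (card P) / 4 \<le> real (card {p \<in> P. a \<bullet> p \<le> a \<bullet> c})"
    using assms(1)[unfolded centerpoint_def, rule_format, OF assms(2) order_refl] .
  then show ?thesis
    by simp
qed

lemma card_samples_failing_centerpoint_le:
  assumes "finite P" "P \<noteq> {}" "centerpoint P c"
  shows "real (card {x \<in> samples 512 P. \<exists>a. a \<noteq> 0 \<and> (\<forall>i<512. a \<bullet> c < a \<bullet> x i)})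
           \<le> real (card P) ^ 512 / 4"
proof -
  define \<K> where "\<K> = {{p. a \<bullet> p \<le> a \<bullet> c} | a. a \<noteq> (0::real^3)}"
  have "{x \<in> samples 512 P. \<exists>a. a \<noteq> 0 \<and> (\<forall>i<512. a \<bullet> c < a \<bullet> x i)}
        = {x \<in> samples 512 P. \<exists>K\<in>\<K>. \<forall>i<512. x i \<notin> K}"
  proof (intro Collect_cong conj_cong refl)
    fix x :: "nat \<Rightarrow> real^3"
    show "(\<exists>a. a \<noteq> 0 \<and> (\<forall>i<512. a \<bullet> c < a \<bullet> x i)) \<longleftrightarrow> (\<exists>K\<in>\<K>. \<forall>i<512. x i \<notin> K)"
    proof
      assume "\<exists>a. a \<noteq> 0 \<and> (\<forall>i<512. a \<bullet> c < a \<bullet> x i)"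
      then obtain a where "a \<noteq> 0" "\<forall>i<512. a \<bullet> c < a \<bullet> x i"
        by blast
      then show "\<exists>K\<in>\<K>. \<forall>i<512. x i \<notin> K"
        unfolding \<K>_def by (intro bexI[of _ "{p. a \<bullet> p \<le> a \<bullet> c}"]) (auto simp: not_le)
    qed (auto simp: \<K>_def not_le)
  qed
  also have "real (card \<dots>) \<le> real (card P) ^ 512 / 4"
  proof (rule card_samples_missing_heavy_set_le[OF assms(1,2)])
    show "card S \<le> 4" if "S \<subseteq> P" "shatters \<K> S" for S
      using shatters_halfspaces_card_le[of \<K> S] that unfolding \<K>_def by fastforce
    show "card P \<le> 4 * card (K \<inter> P)" if K: "K \<in> \<K>" for K
    proof -
      obtain a where "a \<noteq> 0" "K = {p. a \<bullet> p \<le> a \<bullet> c}"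
        using K unfolding \<K>_def by blast
      then have "K \<inter> P = {p \<in> P. a \<bullet> p \<le> a \<bullet> c}"
        by blast
      then show ?thesis
        using centerpoint_halfspace_card[OF assms(3) \<open>a \<noteq> 0\<close>] by simp
    qed
  qed
  finally show ?thesis .
qed

lemma sample_has_crossing_triangle:
  fixes M :: "(real^3) set"
  assumes "finite M" "3 \<le> card M" "\<forall>p\<in>M. 0 < p $ 3" "r $ 3 = 0"
    and "\<not> (\<exists>a. a \<noteq> 0 \<and> (\<forall>p\<in>M. a \<bullet> c < a \<bullet> p))"
  shows "\<exists>T\<subseteq>M. card T = 3 \<and> convex hull T \<inter> closed_segment c r \<noteq> {}"
proof -
  have "M \<noteq> {}"
    using assms(2) by auto
  then have "c \<in> convex hull M"
    using separating_hyperplane_convex_hull[OF assms(1)] assms(5) by blast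
  have "{x::real^3. 0 < x $ 3} = {x. 0 < axis 3 1 \<bullet> x}"
    by (auto simp: inner_axis')
  then have "convex hull M \<subseteq> {x::real^3. 0 < x $ 3}"
    using assms(3) by (intro hull_minimal) (auto simp: convex_halfspace_gt)
  then have "r \<notin> convex hull M"
    using assms(4) by auto
  then show ?thesis
    using segment_meets_facet_of_convex_hull[OF assms(1) _ \<open>c \<in> convex hull M\<close>] assms(2) by simp
qed

lemma card_samples_degenerate_le:
  assumes "finite P" "4 \<le> card P"
  shows "real (card {x \<in> samples 512 P. card (x ` {..<512}) \<le> 2}) \<le> real (card P) ^ 512 / 4"
proof -
  define m :: nat where "m = 512"
  define n where "n = card P"
  have "2 * n + 1 \<le> n * n"
    using mult_le_mono1[OF assms(2), of n] assms(2) unfolding n_def by linarith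
  then have "(n + 1) ^ 2 \<le> 2 * n ^ 2"
    by (simp add: power2_eq_square algebra_simps)
  then have "4 * ((n + 1) ^ 2 * 2 ^ m) \<le> n ^ 2 * (8 * 2 ^ m)"
    by simp
  also have "\<dots> \<le> n ^ 2 * 4 ^ (m - 2)"
    unfolding m_def by simp
  also have "\<dots> \<le> n ^ 2 * n ^ (m - 2)"
    using assms(2) unfolding n_def by (intro mult_left_mono power_mono) simp_all
  also have "\<dots> = n ^ m"
    unfolding m_def by (simp flip: power_add)
  finally have "real (4 * ((n + 1) ^ 2 * 2 ^ m)) \<le> real n ^ m"
    by (metis of_nat_le_iff of_nat_power)
  moreover have "card {x \<in> samples m P. card (x ` {..<m}) \<le> 2} \<le> (n + 1) ^ 2 * 2 ^ m"
    unfolding n_def by (rule card_samples_small_range_le[OF assms(1)])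
  ultimately have "real (card {x \<in> samples m P. card (x ` {..<m}) \<le> 2}) \<le> real n ^ m / 4"
    by linarith
  then show ?thesis
    unfolding m_def n_def .
qed

lemma card_triangles_crossing_segment_ge:
  fixes P :: "(real^3) set" and c r :: "real^3"
  assumes "finite P" "4 \<le> card P" "\<forall>p\<in>P. 0 < p $ 3" "centerpoint P c" "r $ 3 = 0"
  shows "real (card P) ^ 3
           \<le> 2 * 512 ^ 3 * real (card {S \<in> triangles P. convex hull S \<inter> closed_segment c r \<noteq> {}})"
proof -
  define m :: nat where "m = 512"
  define n where "n = card P"
  define \<Omega> where "\<Omega> = samples m P"
  define N where "N = real n ^ m"
  define G where "G = {S \<in> triangles P. convex hull S \<inter> closed_segment c r \<noteq> {}}"
  define Fail where "Fail = {x \<in> \<Omega>. \<exists>a. a \<noteq> 0 \<and> (\<forall>i<m. a \<bullet> c < a \<bullet> x i)}"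
  define Small where "Small = {x \<in> \<Omega>. card (x ` {..<m}) \<le> 2}"
  have "P \<noteq> {}" "n > 0"
    using assms(2) unfolding n_def by auto
  have fin: "finite \<Omega>"
    unfolding \<Omega>_def using assms(1) by (simp add: finite_PiE)
  have finG: "finite G"
    unfolding G_def triangles_def using assms(1) by (auto intro: finite_subset[of _ "Pow P"])
  have "real (card Fail) \<le> N / 4"
    using card_samples_failing_centerpoint_le[OF assms(1) \<open>P \<noteq> {}\<close> assms(4)]
    unfolding Fail_def \<Omega>_def N_def n_def m_def .
  moreover have "real (card Small) \<le> N / 4"
    using card_samples_degenerate_le[OF assms(1,2)] unfolding Small_def \<Omega>_def N_def n_def m_def .
  moreover have "real (card \<Omega>) = N"
    unfolding \<Omega>_def N_def n_def using assms(1) by (simp add: card_PiE)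
  moreover have "card \<Omega> \<le> card ((\<Omega> - Fail - Small) \<union> Fail \<union> Small)"
    using fin by (intro card_mono) (auto simp: Fail_def Small_def)
  moreover have "\<dots> \<le> card (\<Omega> - Fail - Small) + card Fail + card Small"
    by (meson add_le_mono card_Un_le le_refl order_trans)
  ultimately have "N / 2 \<le> real (card (\<Omega> - Fail - Small))"
    by linarith
  also have "\<dots> \<le> real (card (\<Union>T\<in>G. {x \<in> \<Omega>. T \<subseteq> x ` {..<m}}))"
  proof (intro of_nat_mono card_mono subsetI)
    fix x assume x: "x \<in> \<Omega> - Fail - Small"
    then have "x ` {..<m} \<subseteq> P"
      unfolding \<Omega>_def by (auto dest: PiE_mem)
    have "\<not> (\<exists>a. a \<noteq> 0 \<and> (\<forall>p\<in>x ` {..<m}. a \<bullet> c < a \<bullet> p))"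
      using x unfolding Fail_def by auto
    moreover have "3 \<le> card (x ` {..<m})"
      using x unfolding Small_def by auto
    moreover have "\<forall>p\<in>x ` {..<m}. 0 < p $ 3"
      using \<open>x ` {..<m} \<subseteq> P\<close> assms(3) by blast
    ultimately have "\<exists>T\<subseteq>x ` {..<m}. card T = 3 \<and> convex hull T \<inter> closed_segment c r \<noteq> {}"
      using sample_has_crossing_triangle[of "x ` {..<m}" r c] assms(5) by blast
    then obtain T where "T \<subseteq> x ` {..<m}" "card T = 3" "convex hull T \<inter> closed_segment c r \<noteq> {}"
      by blast
    then show "x \<in> (\<Union>T\<in>G. {x \<in> \<Omega>. T \<subseteq> x ` {..<m}})"
      using x \<open>x ` {..<m} \<subseteq> P\<close> unfolding G_def triangles_def by blast
  qed (use fin finG in auto)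
  also have "\<dots> \<le> real (\<Sum>T\<in>G. card {x \<in> \<Omega>. T \<subseteq> x ` {..<m}})"
    using finG by (intro of_nat_mono card_UN_le)
  also have "\<dots> \<le> real (\<Sum>T\<in>G. m ^ 3 * n ^ (m - 3))"
  proof (intro of_nat_mono sum_mono)
    fix T assume "T \<in> G"
    then have "T \<subseteq> P" "card T = 3"
      unfolding G_def triangles_def by auto
    then show "card {x \<in> \<Omega>. T \<subseteq> x ` {..<m}} \<le> m ^ 3 * n ^ (m - 3)"
      using card_samples_covering_le[OF assms(1) \<open>T \<subseteq> P\<close>, of m] unfolding \<Omega>_def n_def by simp
  qed
  also have "\<dots> = real (card G) * real m ^ 3 * real n ^ (m - 3)"
    by simp
  finally have "real n ^ 3 * real n ^ (m - 3) / 2 \<le> real (card G) * real m ^ 3 * real n ^ (m - 3)"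
    unfolding N_def m_def by (simp flip: power_add)
  then have "real n ^ 3 \<le> 2 * real m ^ 3 * real (card G)"
    using \<open>n > 0\<close> by (simp add: field_simps)
  then show ?thesis
    unfolding n_def m_def G_def by simp
qed

theorem lemma2p16:
  shows "\<exists>C::real. C > 0 \<and> (\<exists>N::nat. \<forall>(P::(real^3) set) (c::real^3) (r::real^3).
            finite P \<longrightarrow> card P \<ge> N \<longrightarrow>
            (\<forall>p\<in>P. p $ 3 > 0) \<longrightarrow> centerpoint P c \<longrightarrow> r $ 3 = 0 \<longrightarrow>
            real (card {S \<in> triangles P. convex hull S \<inter> closed_segment c r \<noteq> {}})
              \<ge> C * real (card P) ^ 3)"
proof -
  have "1 / (2 * 512 ^ 3) * real (card P) ^ 3
          \<le> real (card {S \<in> triangles P. convex hull S \<inter> closed_segment c r \<noteq> {}})"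
    if "finite P" "4 \<le> card P" "\<forall>p\<in>P. 0 < p $ 3" "centerpoint P c" "r $ 3 = 0"
    for P :: "(real^3) set" and c r :: "real^3"
    using card_triangles_crossing_segment_ge[OF that] by simp
  then show ?thesis
    by (intro exI[of _ "1 / (2 * 512 ^ 3)"] conjI exI[of _ 4]) auto
qed

end
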